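(* Let $\Psi$ be an SP-expression in the $n\ge 1$ distinct variables $x_1,\dots,x_n$, let $\alpha$ be the SP-order on $X=\{x_1,\dots,x_n\}$ determined by $\Psi$, and let $\alpha^{*}$ be the SP-order determined by the dual expression $\Psi^{*}$. Define the quantitative entropy $H_q=\log_2|R(\alpha)|$, the positional entropy $H_p=\log_2|R(\alpha^{*})|$, and $H_{max}=\log_2(n!)$. Then $$H_p+H_q=H_{max},$$ equivalently $|R(\alpha)|\cdot|R(\alpha^{*})| = n!$.
   Context: All partial orders are finite. For posets $\alpha_1=(A_1,\sqsubseteq_1)$, $\alpha_2=(A_2,\sqsubseteq_2)$ with $A_1\cap A_2=\emptyset$, the series composition is $\alpha_1\otimes\alpha_2=(A_1\cup A_2,\ \sqsubseteq_1\cup\sqsubseteq_2\cup(A_1\times A_2))$ (every element of $\alpha_1$ lies below every element of $\alpha_2$) and the parallel composition is $\alpha_1\parallel\alpha_2=(A_1\cup A_2,\ \sqsubseteq_1\cup\sqsubseteq_2)$. An SP-expression is built from variables $x_i$ using the binary symbols $\otimes$ and $\parallel$ (with brackets), each variable occurring at most once. The SP-order determined by an SP-expression $\Psi$ is obtained by interpreting each variable $x_i$ as the one-element poset on $\{x_i\}$, each $\otimes$ as series composition and each $\parallel$ as parallel composition, evaluated according to the bracketing; its underlying set is the set of variables of $\Psi$. The dual expression $\Psi^{*}$ is obtained from $\Psi$ by interchanging every $\otimes$ with $\parallel$ and vice versa (e.g. the dual of $((x_1\otimes x_2)\parallel x_3)\otimes x_4$ is $((x_1\parallel x_2)\otimes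 x_3)\parallel x_4$). For a poset $\alpha=(X,\sqsubseteq)$ with $|X|=n$, its state space $R(\alpha)$ is the set of root states, i.e. bijections $l:X\to\{1,\dots,n\}$ that are increasing ($x\sqsubseteq y$, $x\neq y$ implies $l(x)<l(y)$); these are the topological sorts (linear extensions) of $\alpha$ up to isomorphism of labelings, the elements $x_1,\dots,x_n$ being distinguishable. In particular for the discrete (antichain) order $\Delta_n$ one has $|R(\Delta_n)|=n!$. *)

theory Defs
  imports Complex_Main "HOL-Library.FuncSet"
begin

datatype 'a spexpr = SPVar 'a | SPSer "'a spexpr" "'a spexpr" | SPPar "'a spexpr" "'a spexpr"

fun sp_vars :: "'a spexpr \<Rightarrow> 'a set" where
  "sp_vars (SPVar x) = {x}"
| "sp_vars (SPSer a b) = sp_vars a \<union> sp_vars b"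
| "sp_vars (SPPar a b) = sp_vars a \<union> sp_vars b"

fun sp_wf :: "'a spexpr \<Rightarrow> bool" where
  "sp_wf (SPVar x) = True"
| "sp_wf (SPSer a b) = (sp_wf a \<and> sp_wf b \<and> sp_vars a \<inter> sp_vars b = {})"
| "sp_wf (SPPar a b) = (sp_wf a \<and> sp_wf b \<and> sp_vars a \<inter> sp_vars b = {})"

fun sp_dual :: "'a spexpr \<Rightarrow> 'a spexpr" where
  "sp_dual (SPVar x) = SPVar x"
| "sp_dual (SPSer a b) = SPPar (sp_dual a) (sp_dual b)"
| "sp_dual (SPPar a b) = SPSer (sp_dual a) (sp_dual b)"

fun sp_order :: "'a spexpr \<Rightarrow> 'a rel" where
  "sp_order (SPVar x) = {(x, x)}"
| "sp_order (SPSer a b) = sp_order a \<union> sp_order b \<union> (sp_vars a \<times> sp_vars b)"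
| "sp_order (SPPar a b) = sp_order a \<union> sp_order b"

text \<open>State space R of a poset (X, r): increasing bijections X \<rightarrow> {1..|X|}
  (extensional outside X so that distinct labelings are distinct functions).\<close>
definition root_states :: "'a set \<Rightarrow> 'a rel \<Rightarrow> ('a \<Rightarrow> nat) set" where
  "root_states X r = {l \<in> X \<rightarrow>\<^sub>E {1..card X}. bij_betw l X {1..card X} \<and>
       (\<forall>x y. (x, y) \<in> r \<and> x \<noteq> y \<longrightarrow> l x < l y)}"

end

theory Submission
  imports Defs "HOL-Library.Infinite_Set"
begin

text \<open>A linear extension of a series composition places all of the first order below all of
  the second, so \<open>|R(\<alpha>\<^sub>1 \<otimes> \<alpha>\<^sub>2)| = |R(\<alpha>\<^sub>1)| |R(\<alpha>\<^sub>2)|\<close>; for a parallel composition one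
  first chooses which \<open>n\<^sub>1\<close> of the \<open>n\<^sub>1 + n\<^sub>2\<close> labels go to \<open>\<alpha>\<^sub>1\<close>, so
  \<open>|R(\<alpha>\<^sub>1 \<parallel> \<alpha>\<^sub>2)| = (n\<^sub>1 + n\<^sub>2 choose n\<^sub>1) |R(\<alpha>\<^sub>1)| |R(\<alpha>\<^sub>2)|\<close>. Duality exchanges the two
  rules, hence by induction \<open>|R(\<alpha>)| |R(\<alpha>\<^sup>*)| = (n\<^sub>1 + n\<^sub>2 choose n\<^sub>1) n\<^sub>1! n\<^sub>2! = n!\<close>.
  To make the induction go through, labelings are taken into arbitrary finite sets of
  labels; their number depends only on the size of the label set.\<close>

definition increasing_labelings :: "'b::linorder set \<Rightarrow> 'a set \<Rightarrow> 'a rel \<Rightarrow> ('a \<Rightarrow> 'b) set" where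
  "increasing_labelings S X r = {l \<in> X \<rightarrow>\<^sub>E S. bij_betw l X S \<and>
       (\<forall>x y. (x, y) \<in> r \<and> x \<noteq> y \<longrightarrow> l x < l y)}"

lemma root_states_eq_increasing_labelings:
  "root_states X r = increasing_labelings {1..card X} X r"
  unfolding root_states_def increasing_labelings_def ..

lemma finite_increasing_labelings:
  "finite X \<Longrightarrow> finite S \<Longrightarrow> finite (increasing_labelings S X r)"
  unfolding increasing_labelings_def
  by (rule finite_subset[OF _ finite_PiE[of X "\<lambda>_. S"]]) auto

lemma strict_mono_on_the_inv_into:
  fixes h :: "'a::linorder \<Rightarrow> 'b::linorder"
  assumes "bij_betw h S T" and "strict_mono_on S h"
  shows "strict_mono_on T (the_inv_into S h)"
proof (rule strict_mono_onI)
  fix s t assume "s \<in> T" "t \<in> T" "s < t"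
  let ?g = "the_inv_into S h"
  have "?g s \<in> S" "?g t \<in> S"
    using \<open>s \<in> T\<close> \<open>t \<in> T\<close> bij_betw_the_inv_into[OF assms(1)] bij_betwE by blast+
  moreover have "h (?g s) < h (?g t)"
    using \<open>s \<in> T\<close> \<open>t \<in> T\<close> \<open>s < t\<close> f_the_inv_into_f_bij_betw[OF assms(1)] by simp
  ultimately show "?g s < ?g t"
    using strict_mono_on_less[OF assms(2)] by blast
qed

lemma compose_increasing_labeling:
  assumes l: "l \<in> increasing_labelings S X r" and h: "bij_betw h S T" "strict_mono_on S h"
    and r: "r \<subseteq> X \<times> X"
  shows "restrict (h \<circ> l) X \<in> increasing_labelings T X r"
proof -
  have l_bij: "bij_betw l X S" and l_mono: "\<forall>x y. (x, y) \<in> r \<and> x \<noteq> y \<longrightarrow> l x < l y"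
    and l_into: "\<forall>x\<in>X. l x \<in> S"
    using l by (auto simp: increasing_labelings_def)
  have hl: "bij_betw (h \<circ> l) X T" using bij_betw_trans[OF l_bij h(1)] .
  moreover have "(h \<circ> l) x < (h \<circ> l) y" if "(x, y) \<in> r" "x \<noteq> y" for x y
    using that r l_mono l_into strict_mono_onD[OF h(2)] by auto
  ultimately show ?thesis
    using bij_betwE[OF hl] r by (auto simp: increasing_labelings_def)
qed

lemma bij_betw_compose_increasing_labelings:
  fixes h :: "'b::linorder \<Rightarrow> 'c::linorder"
  assumes h: "bij_betw h S T" "strict_mono_on S h" and r: "r \<subseteq> X \<times> X"
  shows "bij_betw (\<lambda>l. restrict (h \<circ> l) X) (increasing_labelings S X r) (increasing_labelings T X r)"
proof -
  let ?g = "the_inv_into S h"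
  have g: "bij_betw ?g T S" "strict_mono_on T ?g"
    using bij_betw_the_inv_into[OF h(1)] strict_mono_on_the_inv_into[OF h] .
  have cancel: "restrict (f' \<circ> restrict (f \<circ> l) X) X = l"
    if "l \<in> increasing_labelings A X r" "\<And>a. a \<in> A \<Longrightarrow> f' (f a) = a" for l A f f'
  proof
    fix x
    have "l \<in> X \<rightarrow>\<^sub>E A" using that(1) by (simp add: increasing_labelings_def)
    then show "restrict (f' \<circ> restrict (f \<circ> l) X) X x = l x"
      using that(2) by (cases "x \<in> X") auto
  qed
  show ?thesis
  proof (rule bij_betw_byWitness[where f' = "\<lambda>l. restrict (?g \<circ> l) X"])
    show "\<forall>l\<in>increasing_labelings S X r. restrict (?g \<circ> restrict (h \<circ> l) X) X = l"
      using cancel the_inv_into_f_f[OF bij_betw_imp_inj_on[OF h(1)]] by blast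
    show "\<forall>l\<in>increasing_labelings T X r. restrict (h \<circ> restrict (?g \<circ> l) X) X = l"
      using cancel f_the_inv_into_f_bij_betw[OF h(1)] by blast
    show "(\<lambda>l. restrict (h \<circ> l) X) ` increasing_labelings S X r \<subseteq> increasing_labelings T X r"
      using compose_increasing_labeling[OF _ h r] by blast
    show "(\<lambda>l. restrict (?g \<circ> l) X) ` increasing_labelings T X r \<subseteq> increasing_labelings S X r"
      using compose_increasing_labeling[OF _ g r] by blast
  qed
qed

lemma card_increasing_labelings_eq:
  fixes S T :: "'b::wellorder set"
  assumes "finite S" "finite T" "card S = card T" and r: "r \<subseteq> X \<times> X"
  shows "card (increasing_labelings S X r) = card (increasing_labelings T X r)"
proof -
  obtain hS where hS: "bij_betw hS {..<card S} S" "strict_mono_on {..<card S} hS"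
    using ex_bij_betw_strict_mono_card[OF \<open>finite S\<close>] .
  obtain hT where hT: "bij_betw hT {..<card S} T" "strict_mono_on {..<card S} hT"
    using ex_bij_betw_strict_mono_card[OF \<open>finite T\<close>] \<open>card S = card T\<close> by metis
  have "card (increasing_labelings {..<card S} X r) = card (increasing_labelings S X r)"
    using bij_betw_same_card[OF bij_betw_compose_increasing_labelings[OF hS r]] .
  moreover have "card (increasing_labelings {..<card S} X r) = card (increasing_labelings T X r)"
    using bij_betw_same_card[OF bij_betw_compose_increasing_labelings[OF hT r]] .
  ultimately show ?thesis by simp
qed

lemma restrict_increasing_labeling:
  assumes l: "l \<in> increasing_labelings S X r" and "Y \<subseteq> X" "r' \<subseteq> r" "r' \<subseteq> Y \<times> Y"
  shows "restrict l Y \<in> increasing_labelings (l ` Y) Y r'"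
proof -
  have "inj_on l Y"
    using l \<open>Y \<subseteq> X\<close> by (auto simp: increasing_labelings_def bij_betw_def intro: inj_on_subset)
  then show ?thesis
    using l assms(3,4) by (auto simp: increasing_labelings_def inj_on_imp_bij_betw)
qed

lemma merge_increasing_labelings:
  assumes la: "la \<in> increasing_labelings T A rA" and lb: "lb \<in> increasing_labelings U B rB"
    and "A \<inter> B = {}" "T \<inter> U = {}" "rA \<subseteq> A \<times> A" "rB \<subseteq> B \<times> B" "C \<subseteq> A \<times> B"
    and C: "\<forall>(x, y)\<in>C. la x < lb y"
  shows "(\<lambda>x. if x \<in> A then la x else lb x) \<in> increasing_labelings (T \<union> U) (A \<union> B) (rA \<union> rB \<union> C)"
    (is "?l \<in> _")
proof -
  have la': "la \<in> A \<rightarrow>\<^sub>E T" "bij_betw la A T" "\<forall>x y. (x, y) \<in> rA \<and> x \<noteq> y \<longrightarrow> la x < la y"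
    and lb': "lb \<in> B \<rightarrow>\<^sub>E U" "bij_betw lb B U" "\<forall>x y. (x, y) \<in> rB \<and> x \<noteq> y \<longrightarrow> lb x < lb y"
    using la lb by (auto simp: increasing_labelings_def)
  have "bij_betw ?l A T" using la'(2) by (rule bij_betw_cong[THEN iffD1, rotated]) simp
  moreover have "bij_betw ?l B U"
    by (rule bij_betw_cong[THEN iffD1, OF _ lb'(2)]) (use \<open>A \<inter> B = {}\<close> in auto)
  ultimately have "bij_betw ?l (A \<union> B) (T \<union> U)"
    using \<open>T \<inter> U = {}\<close> by (rule bij_betw_combine)
  moreover have "?l \<in> (A \<union> B) \<rightarrow>\<^sub>E (T \<union> U)"
    using la'(1) lb'(1) by (auto simp: PiE_iff extensional_def)
  moreover have "?l x < ?l y" if "(x, y) \<in> rA \<union> rB \<union> C" "x \<noteq> y" for x y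
    using that(1)
  proof (elim UnE)
    assume "(x, y) \<in> rA"
    then show ?thesis using \<open>rA \<subseteq> A \<times> A\<close> la'(3) \<open>x \<noteq> y\<close> by auto
  next
    assume "(x, y) \<in> rB"
    then show ?thesis using \<open>rB \<subseteq> B \<times> B\<close> \<open>A \<inter> B = {}\<close> lb'(3) \<open>x \<noteq> y\<close> by auto
  next
    assume "(x, y) \<in> C"
    then show ?thesis using \<open>C \<subseteq> A \<times> B\<close> \<open>A \<inter> B = {}\<close> C by auto
  qed
  ultimately show ?thesis
    unfolding increasing_labelings_def by blast
qed

definition labeling_splits ::
  "'b::linorder set \<Rightarrow> 'a set \<Rightarrow> 'a set \<Rightarrow> 'a rel \<Rightarrow> 'a rel \<Rightarrow> 'a rel \<Rightarrow> ('b set \<times> ('a \<Rightarrow> 'b) \<times> ('a \<Rightarrow> 'b)) set"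
  where
  "labeling_splits S A B rA rB C = (SIGMA T:{T. T \<subseteq> S \<and> card T = card A}.
      {(la, lb). la \<in> increasing_labelings T A rA \<and> lb \<in> increasing_labelings (S - T) B rB \<and>
                 (\<forall>(x, y)\<in>C. la x < lb y)})"

lemma bij_betw_labeling_splits:
  assumes AB: "A \<inter> B = {}" and rA: "rA \<subseteq> A \<times> A" and rB: "rB \<subseteq> B \<times> B" and C: "C \<subseteq> A \<times> B"
  shows "bij_betw (\<lambda>l. (l ` A, restrict l A, restrict l B))
           (increasing_labelings S (A \<union> B) (rA \<union> rB \<union> C)) (labeling_splits S A B rA rB C)"
proof (rule bij_betw_byWitness[where f' = "\<lambda>(T, la, lb) x. if x \<in> A then la x else lb x"])
  show "\<forall>l\<in>increasing_labelings S (A \<union> B) (rA \<union> rB \<union> C).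
          (\<lambda>(T, la, lb) x. if x \<in> A then la x else lb x) (l ` A, restrict l A, restrict l B) = l"
  proof
    fix l assume "l \<in> increasing_labelings S (A \<union> B) (rA \<union> rB \<union> C)"
    then have "l \<in> extensional (A \<union> B)"
      by (simp add: increasing_labelings_def PiE_def)
    then show "(\<lambda>(T, la, lb) x. if x \<in> A then la x else lb x) (l ` A, restrict l A, restrict l B) = l"
      by (auto simp: extensional_def)
  qed
  show "\<forall>s\<in>labeling_splits S A B rA rB C.
          (\<lambda>l. (l ` A, restrict l A, restrict l B)) ((\<lambda>(T, la, lb) x. if x \<in> A then la x else lb x) s) = s"
  proof
    fix s assume "s \<in> labeling_splits S A B rA rB C"
    then obtain T la lb where s: "s = (T, la, lb)"
      and la: "la \<in> extensional A" "la ` A = T" and lb: "lb \<in> extensional B"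
      by (auto simp: labeling_splits_def increasing_labelings_def bij_betw_def PiE_def)
    let ?l = "\<lambda>x. if x \<in> A then la x else lb x"
    have "?l ` A = T" using la(2) by simp
    moreover have "restrict ?l A = la" using la(1) by (auto simp: extensional_def)
    moreover have "restrict ?l B = lb" using lb AB by (auto simp: extensional_def fun_eq_iff)
    ultimately show "(\<lambda>l. (l ` A, restrict l A, restrict l B)) ((\<lambda>(T, la, lb) x. if x \<in> A then la x else lb x) s) = s"
      by (simp add: s)
  qed
  show "(\<lambda>l. (l ` A, restrict l A, restrict l B)) ` increasing_labelings S (A \<union> B) (rA \<union> rB \<union> C)
          \<subseteq> labeling_splits S A B rA rB C"
  proof clarify
    fix l assume l: "l \<in> increasing_labelings S (A \<union> B) (rA \<union> rB \<union> C)"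
    then have inj: "inj_on l (A \<union> B)" and im: "l ` (A \<union> B) = S"
      and mono: "\<forall>x y. (x, y) \<in> rA \<union> rB \<union> C \<and> x \<noteq> y \<longrightarrow> l x < l y"
      by (auto simp: increasing_labelings_def bij_betw_def)
    have "l ` A \<inter> l ` B = {}" using inj AB unfolding inj_on_def by blast
    with im have "S - l ` A = l ` B" by auto
    moreover have "card (l ` A) = card A" using inj by (auto intro: card_image inj_on_subset)
    moreover have "restrict l A \<in> increasing_labelings (l ` A) A rA"
      "restrict l B \<in> increasing_labelings (l ` B) B rB"
      using restrict_increasing_labeling[OF l] rA rB by auto
    moreover have "\<forall>(x, y)\<in>C. restrict l A x < restrict l B y"
      using mono C AB by fastforce
    ultimately show "(l ` A, restrict l A, restrict l B) \<in> labeling_splits S A B rA rB C"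
      using im by (auto simp: labeling_splits_def)
  qed
  show "(\<lambda>(T, la, lb) x. if x \<in> A then la x else lb x) ` labeling_splits S A B rA rB C
          \<subseteq> increasing_labelings S (A \<union> B) (rA \<union> rB \<union> C)"
  proof clarify
    fix T la lb assume "(T, la, lb) \<in> labeling_splits S A B rA rB C"
    then have "T \<subseteq> S" "la \<in> increasing_labelings T A rA" "lb \<in> increasing_labelings (S - T) B rB"
      "\<forall>(x, y)\<in>C. la x < lb y"
      by (auto simp: labeling_splits_def)
    with merge_increasing_labelings[of la T A rA lb "S - T" B rB C] AB rA rB C
    show "(\<lambda>x. if x \<in> A then la x else lb x) \<in> increasing_labelings S (A \<union> B) (rA \<union> rB \<union> C)"
      by (simp add: Un_absorb1)
  qed
qed

lemma card_labeling_splits: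
  assumes "A \<inter> B = {}" "rA \<subseteq> A \<times> A" "rB \<subseteq> B \<times> B" "C \<subseteq> A \<times> B"
  shows "card (increasing_labelings S (A \<union> B) (rA \<union> rB \<union> C)) = card (labeling_splits S A B rA rB C)"
  using bij_betw_same_card[OF bij_betw_labeling_splits[OF assms]] .

lemma initial_segment_eq:
  assumes T: "T \<subseteq> {1..n::nat}" and below: "\<forall>t\<in>T. \<forall>s\<in>{1..n} - T. t < s"
  shows "T = {1..card T}"
proof -
  have "finite T" using T finite_subset by blast
  have le_card: "t \<le> card T" if "t \<in> T" for t
  proof -
    have "{1..t} \<subseteq> T"
    proof
      fix s assume s: "s \<in> {1..t}"
      show "s \<in> T"
      proof (rule ccontr)
        assume "s \<notin> T"
        then have "s \<in> {1..n} - T" using s that T by auto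
        then have "t < s" using below that by blast
        with s show False by simp
      qed
    qed
    then have "card {1..t} \<le> card T" by (rule card_mono[OF \<open>finite T\<close>])
    then show ?thesis by simp
  qed
  have "T \<subseteq> {1..card T}" using T le_card by auto
  then show ?thesis using \<open>finite T\<close> by (intro card_subset_eq) auto
qed

lemma labeling_splits_series:
  fixes A B :: "'a set"
  defines "S \<equiv> {1..card A + card B}"
  shows "labeling_splits S A B rA rB (A \<times> B) =
    {{1..card A}} \<times> (increasing_labelings {1..card A} A rA \<times> increasing_labelings (S - {1..card A}) B rB)"
proof (intro set_eqI iffI)
  fix s assume "s \<in> labeling_splits S A B rA rB (A \<times> B)"
  then obtain T la lb where s: "s = (T, la, lb)" and "T \<subseteq> S" "card T = card A"
    and la: "la \<in> increasing_labelings T A rA" and lb: "lb \<in> increasing_labelings (S - T) B rB"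
    and cross: "\<forall>x\<in>A. \<forall>y\<in>B. la x < lb y"
    by (auto simp: labeling_splits_def)
  have "la ` A = T" "lb ` B = S - T"
    using la lb by (simp_all add: increasing_labelings_def bij_betw_def)
  have "t < u" if t: "t \<in> T" and u: "u \<in> S - T" for t u
  proof -
    obtain x where "x \<in> A" "t = la x" using t \<open>la ` A = T\<close> by blast
    moreover obtain y where "y \<in> B" "u = lb y" using u \<open>lb ` B = S - T\<close> by blast
    ultimately show ?thesis using cross by simp
  qed
  then have "T = {1..card A}"
    using initial_segment_eq \<open>T \<subseteq> S\<close> \<open>card T = card A\<close> unfolding S_def by metis
  then show "s \<in> {{1..card A}} \<times> (increasing_labelings {1..card A} A rA \<times>
      increasing_labelings (S - {1..card A}) B rB)"
    using s la lb by simp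
next
  fix s assume "s \<in> {{1..card A}} \<times> (increasing_labelings {1..card A} A rA \<times>
      increasing_labelings (S - {1..card A}) B rB)"
  then obtain la lb where s: "s = ({1..card A}, la, lb)"
    and la: "la \<in> increasing_labelings {1..card A} A rA"
    and lb: "lb \<in> increasing_labelings (S - {1..card A}) B rB"
    by blast
  have "la x < lb y" if "x \<in> A" "y \<in> B" for x y
  proof -
    have "la x \<in> {1..card A}" "lb y \<in> S - {1..card A}"
      using la lb that by (auto simp: increasing_labelings_def)
    then show ?thesis unfolding S_def by auto
  qed
  then show "s \<in> labeling_splits S A B rA rB (A \<times> B)"
    using s la lb unfolding labeling_splits_def S_def by auto
qed

lemma card_root_states_series:
  assumes A: "finite A" and B: "finite B" and AB: "A \<inter> B = {}"
    and rA: "rA \<subseteq> A \<times> A" and rB: "rB \<subseteq> B \<times> B"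
  shows "card (root_states (A \<union> B) (rA \<union> rB \<union> A \<times> B)) =
         card (root_states A rA) * card (root_states B rB)"
proof -
  let ?S = "{1..card A + card B}"
  have "card (root_states (A \<union> B) (rA \<union> rB \<union> A \<times> B)) =
      card (labeling_splits ?S A B rA rB (A \<times> B))"
    using card_labeling_splits[OF AB rA rB order_refl] A B AB
    by (simp add: root_states_eq_increasing_labelings card_Un_disjoint)
  also have "\<dots> = card (increasing_labelings {1..card A} A rA) *
      card (increasing_labelings (?S - {1..card A}) B rB)"
    by (subst labeling_splits_series) (simp add: card_cartesian_product)
  also have "card (increasing_labelings (?S - {1..card A}) B rB) =
      card (increasing_labelings {1..card B} B rB)"
    by (rule card_increasing_labelings_eq[OF _ _ _ rB]) (auto simp: card_Diff_subset)
  finally show ?thesis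
    by (simp add: root_states_eq_increasing_labelings)
qed

lemma card_root_states_parallel:
  assumes A: "finite A" and B: "finite B" and AB: "A \<inter> B = {}"
    and rA: "rA \<subseteq> A \<times> A" and rB: "rB \<subseteq> B \<times> B"
  shows "card (root_states (A \<union> B) (rA \<union> rB)) =
         (card A + card B choose card A) * (card (root_states A rA) * card (root_states B rB))"
proof -
  let ?S = "{1..card A + card B}"
  let ?F = "{T. T \<subseteq> ?S \<and> card T = card A}"
  let ?c = "card (root_states A rA) * card (root_states B rB)"
  have "card (root_states (A \<union> B) (rA \<union> rB)) = card (labeling_splits ?S A B rA rB {})"
    using card_labeling_splits[OF AB rA rB, of "{}" ?S] A B AB
    by (simp add: root_states_eq_increasing_labelings card_Un_disjoint)
  also have "labeling_splits ?S A B rA rB {} =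
      (SIGMA T:?F. increasing_labelings T A rA \<times> increasing_labelings (?S - T) B rB)"
    by (simp add: labeling_splits_def)
  also have "card \<dots> = (\<Sum>T\<in>?F. ?c)"
  proof (rule trans[OF card_SigmaI sum.cong])
    fix T assume T: "T \<in> ?F"
    then have "finite T" "card T = card A" "card (?S - T) = card B"
      by (auto simp: card_Diff_subset finite_subset)
    then have "card (increasing_labelings T A rA) = card (increasing_labelings {1..card A} A rA)"
      "card (increasing_labelings (?S - T) B rB) = card (increasing_labelings {1..card B} B rB)"
      by (auto intro: card_increasing_labelings_eq[OF _ _ _ rA] card_increasing_labelings_eq[OF _ _ _ rB])
    then show "card (increasing_labelings T A rA \<times> increasing_labelings (?S - T) B rB) = ?c"
      by (simp add: card_cartesian_product root_states_eq_increasing_labelings)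
  qed (auto intro: finite_increasing_labelings A B rev_finite_subset)
  also have "\<dots> = (card A + card B choose card A) * ?c"
    using n_subsets[of ?S "card A"] by simp
  finally show ?thesis .
qed

lemma finite_sp_vars: "finite (sp_vars e)"
  by (induction e) auto

lemma sp_order_subset: "sp_order e \<subseteq> sp_vars e \<times> sp_vars e"
  by (induction e) auto

lemma sp_vars_sp_dual [simp]: "sp_vars (sp_dual e) = sp_vars e"
  by (induction e) auto

lemma sp_wf_sp_dual [simp]: "sp_wf (sp_dual e) = sp_wf e"
  by (induction e) auto

lemma card_root_states_singleton: "card (root_states {x} {(x, x)}) = 1"
proof -
  have "root_states {x} {(x, x)} = {\<lambda>y\<in>{x}. 1}"
    by (auto simp: root_states_def bij_betw_def PiE_iff extensional_def)
  then show ?thesis by (simp only: is_singleton_altdef[symmetric] is_singleton_def) blast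
qed

definition sp_count :: "'a spexpr \<Rightarrow> nat" where
  "sp_count e = card (root_states (sp_vars e) (sp_order e))"

lemma sp_count_SPVar: "sp_count (SPVar x) = 1"
  by (simp add: sp_count_def card_root_states_singleton)

lemma card_sp_vars_disjoint:
  "sp_vars a \<inter> sp_vars b = {} \<Longrightarrow> card (sp_vars a \<union> sp_vars b) = card (sp_vars a) + card (sp_vars b)"
  by (simp add: card_Un_disjoint finite_sp_vars)

lemma sp_count_SPSer:
  "sp_wf (SPSer a b) \<Longrightarrow> sp_count (SPSer a b) = sp_count a * sp_count b"
  unfolding sp_count_def by (simp add: card_root_states_series finite_sp_vars sp_order_subset)

lemma sp_count_SPPar:
  "sp_wf (SPPar a b) \<Longrightarrow> sp_count (SPPar a b) =
     (card (sp_vars a) + card (sp_vars b) choose card (sp_vars a)) * (sp_count a * sp_count b)"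
  unfolding sp_count_def by (simp add: card_root_states_parallel finite_sp_vars sp_order_subset)

lemma fact_add_eq_choose_mult: "fact (m + n) = (m + n choose m) * (fact m * fact n)"
  using binomial_fact_lemma[of m "m + n"] by (simp add: algebra_simps)

lemma sp_count_mult_sp_count_dual:
  "sp_wf e \<Longrightarrow> sp_count e * sp_count (sp_dual e) = fact (card (sp_vars e))"
proof (induction e)
  case (SPVar x)
  then show ?case by (simp add: sp_count_SPVar)
next
  case (SPSer a b)
  have "sp_count (SPSer a b) * sp_count (sp_dual (SPSer a b)) =
      (card (sp_vars a) + card (sp_vars b) choose card (sp_vars a)) *
      ((sp_count a * sp_count (sp_dual a)) * (sp_count b * sp_count (sp_dual b)))"
    using SPSer.prems by (simp add: sp_count_SPSer sp_count_SPPar)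
  with SPSer show ?case
    by (simp add: card_sp_vars_disjoint fact_add_eq_choose_mult)
next
  case (SPPar a b)
  have "sp_count (SPPar a b) * sp_count (sp_dual (SPPar a b)) =
      (card (sp_vars a) + card (sp_vars b) choose card (sp_vars a)) *
      ((sp_count a * sp_count (sp_dual a)) * (sp_count b * sp_count (sp_dual b)))"
    using SPPar.prems by (simp add: sp_count_SPPar sp_count_SPSer)
  with SPPar show ?case
    by (simp add: card_sp_vars_disjoint fact_add_eq_choose_mult)
qed

theorem mainTheorem1:
  fixes \<Psi> :: "'a spexpr"
  assumes "sp_wf \<Psi>"
  defines "n \<equiv> card (sp_vars \<Psi>)"
  defines "Hq \<equiv> log 2 (real (card (root_states (sp_vars \<Psi>) (sp_order \<Psi>))))"
  defines "Hp \<equiv> log 2 (real (card (root_states (sp_vars (sp_dual \<Psi>)) (sp_order (sp_dual \<Psi>)))))"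
  defines "Hmax \<equiv> log 2 (real (fact n))"
  shows "Hp + Hq = Hmax \<and>
         card (root_states (sp_vars \<Psi>) (sp_order \<Psi>)) *
         card (root_states (sp_vars (sp_dual \<Psi>)) (sp_order (sp_dual \<Psi>))) = fact n"
proof -
  have product: "sp_count \<Psi> * sp_count (sp_dual \<Psi>) = fact n"
    unfolding n_def using sp_count_mult_sp_count_dual[OF assms(1)] .
  then have "sp_count \<Psi> > 0" "sp_count (sp_dual \<Psi>) > 0"
    by (metis fact_nonzero mult_is_0 neq0_conv)+
  then have "Hp + Hq = log 2 (real (sp_count \<Psi> * sp_count (sp_dual \<Psi>)))"
    by (simp add: Hp_def Hq_def sp_count_def log_mult)
  also have "\<dots> = Hmax"
    unfolding Hmax_def product by simp
  finally show ?thesis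
    using product by (simp add: sp_count_def)
qed

end
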